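(* Let $T$ be a primed tableau, $1\le i\le k-1$, $j=i+1$, and suppose the $i$–$j$ reading subword of $T$ has an unbracketed $i$; let $x,E_x,S_x$ be as in the definition of $f_i$. (a) If $c(E_x)=j'$ (case F2, so $q=E_x$), then $c(S_q)>j$, where $S_q$ is the position directly below $q$. (b) If $c(E_x)\ge j$ and $c(S_x)\in\{j',j\}$ (case F3), then for every box of the ribbon defined in F3 that contains $j$, the box diagonally above and to the left of it contains $i$; and the Southwest-most box $q$ of this ribbon satisfies $c(q)=j'$.
   Context: Primed tableaux: Fix $k$. $X'_k=\{1'<1<2'<2<\dots<k'<k\}$; moving one step up in this chain is "increasing by a half unit" (e.g. $i'\to i$, $i\to (i+1)'$). A primed tableau of (skew) shape $\lambda/\mu$ is a filling of the diagram (English convention; "below" = next row down) with letters of $X'_k$, rows and columns weakly increasing, at most one $i'$ per row and at most one $i$ per column, for every $i$. For a position $p$, $c(p)$ is its entry, with $c(p)=\infty$ if $p$ is not a box of $T$. The reading word of $T$ is the word of its unprimed entries, read row by row left to right, from the bottom row to the top row. Bracketing: fix $i$, $j=i+1$. In the subword of the reading word consisting of the letters $i$ and $j$, repeatedly pair (bracket) a letter $j$ with a letter $i$ occurring later such that no unbracketed letters lie between them, until the unbracketed letters form a word $i^aj^b$. Operator $f_i$: if there is no unbracketed $i$, $f_i(T)=0$. Otherwise let $x$ be the box of $T$ corresponding to the rightmost unbracketed $i$; $E_x$ the position immediately right of $x$, $S_x$ the position immediately below $x$. Choose a box $q$: (F1) if $c(E_x)\ge j$ and $c(S_x)>j$,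 $q=x$; (F2) if $c(E_x)=j'$, $q=E_x$; (F3) if $c(E_x)\ge j$ and $c(S_x)\in\{j',j\}$, take the maximal ribbon (connected skew strip) starting at $S_x$ and extending by steps South and/or West consisting only of boxes with entries $j$ or $j'$, and let $q$ be its Southwest-most box. Then $f_i(T)$ is obtained from $T$ by increasing $c(x)$ by a half unit and then increasing $c(q)$ by a half unit (so if $q=x$ the entry of $x$ increases by a full unit). *)

theory Defs
  imports Main "HOL-Library.Extended_Nat"
begin

text \<open>The chain 1' < 1 < 2' < 2 < ... < k' < k is encoded by 1 < 2 < 3 < 4 < ... < 2k-1 < 2k:
  the primed letter i' is 2i-1, the unprimed letter i is 2i.  Increasing by a half unit
  is adding 1.  Odd values are primed letters, even values unprimed letters.\<close>

definition primed :: "nat \<Rightarrow> nat" where "primed i = 2 * i - 1"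
definition unprimed :: "nat \<Rightarrow> nat" where "unprimed i = 2 * i"

text \<open>A partition is a weakly decreasing list of naturals.  Positions are (row, column) pairs
  of integers, rows numbered top to bottom from 0 (English convention), columns left to right
  from 0.\<close>

definition is_partition :: "nat list \<Rightarrow> bool" where
  "is_partition lam = sorted_wrt (\<ge>) lam"

definition part :: "nat list \<Rightarrow> nat \<Rightarrow> nat" where
  "part mu r = (if r < length mu then mu ! r else 0)"

definition skew_shape :: "nat list \<Rightarrow> nat list \<Rightarrow> bool" where
  "skew_shape lam mu \<longleftrightarrow> is_partition lam \<and> is_partition mu \<and> length mu \<le> length lam
     \<and> (\<forall>r < length mu. mu ! r \<le> lam ! r)"

definition boxes :: "nat list \<Rightarrow> nat list \<Rightarrow> (int \<times> int) set" where
  "boxes lam mu = {(r, c). 0 \<le> r \<and> nat r < length lam \<and> int (part mu (nat r)) \<le> c \<and> c < int (lam ! nat r)}"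

definition east :: "int \<times> int \<Rightarrow> int \<times> int" where "east p = (fst p, snd p + 1)"
definition west :: "int \<times> int \<Rightarrow> int \<times> int" where "west p = (fst p, snd p - 1)"
definition south :: "int \<times> int \<Rightarrow> int \<times> int" where "south p = (fst p + 1, snd p)"
definition northwest :: "int \<times> int \<Rightarrow> int \<times> int" where "northwest p = (fst p - 1, snd p - 1)"

definition entry :: "nat list \<Rightarrow> nat list \<Rightarrow> (int \<times> int \<Rightarrow> nat) \<Rightarrow> int \<times> int \<Rightarrow> enat" where
  "entry lam mu T p = (if p \<in> boxes lam mu then enat (T p) else \<infinity>)"

definition primed_tableau :: "nat \<Rightarrow> nat list \<Rightarrow> nat list \<Rightarrow> (int \<times> int \<Rightarrow> nat) \<Rightarrow> bool" where
  "primed_tableau k lam mu T \<longleftrightarrow>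
     skew_shape lam mu
   \<and> (\<forall>p \<in> boxes lam mu. 1 \<le> T p \<and> T p \<le> 2 * k)
   \<and> (\<forall>r c c'. (r, c) \<in> boxes lam mu \<longrightarrow> (r, c') \<in> boxes lam mu \<longrightarrow> c \<le> c' \<longrightarrow> T (r, c) \<le> T (r, c'))
   \<and> (\<forall>r r' c. (r, c) \<in> boxes lam mu \<longrightarrow> (r', c) \<in> boxes lam mu \<longrightarrow> r \<le> r' \<longrightarrow> T (r, c) \<le> T (r', c))
   \<and> (\<forall>r c c'. (r, c) \<in> boxes lam mu \<longrightarrow> (r, c') \<in> boxes lam mu \<longrightarrow> odd (T (r, c)) \<longrightarrow> T (r, c) = T (r, c') \<longrightarrow> c = c')
   \<and> (\<forall>r r' c. (r, c) \<in> boxes lam mu \<longrightarrow> (r', c) \<in> boxes lam mu \<longrightarrow> even (T (r, c)) \<longrightarrow> T (r, c) = T (r', c) \<longrightarrow> r = r')"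

definition reading_word :: "nat list \<Rightarrow> nat list \<Rightarrow> (int \<times> int \<Rightarrow> nat) \<Rightarrow> (nat \<times> (int \<times> int)) list" where
  "reading_word lam mu T =
     concat (map (\<lambda>r. map (\<lambda>c. (T (int r, int c), (int r, int c)))
                        (filter (\<lambda>c. even (T (int r, int c))) [part mu r..<lam ! r]))
             (rev [0..<length lam]))"

definition ij_subword :: "nat \<Rightarrow> nat list \<Rightarrow> nat list \<Rightarrow> (int \<times> int \<Rightarrow> nat) \<Rightarrow> (nat \<times> (int \<times> int)) list" where
  "ij_subword i lam mu T = filter (\<lambda>(v, _). v = unprimed i \<or> v = unprimed (i + 1)) (reading_word lam mu T)"

definition unbr :: "(nat \<times> nat) set \<Rightarrow> nat \<Rightarrow> bool" where
  "unbr B m \<longleftrightarrow> m \<notin> fst ` B \<and> m \<notin> snd ` B"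

text \<open>The bracketing procedure: repeatedly pair a letter b (= j) with a later letter a (= i)
  when both are unbracketed and no unbracketed letters lie between them.  Pairs are
  (index of j, index of i).\<close>
inductive bracketing :: "nat \<Rightarrow> nat \<Rightarrow> nat list \<Rightarrow> (nat \<times> nat) set \<Rightarrow> bool"
  for a b :: nat and w :: "nat list" where
  empty: "bracketing a b w {}"
| step: "\<lbrakk> bracketing a b w B; p < q; q < length w; w ! p = b; w ! q = a;
           unbr B p; unbr B q; \<forall>m. p < m \<and> m < q \<longrightarrow> \<not> unbr B m \<rbrakk>
         \<Longrightarrow> bracketing a b w (insert (p, q) B)"

text \<open>The procedure has terminated: the unbracketed letters form a word a^s b^t.\<close>
definition bracketing_complete :: "nat \<Rightarrow> nat \<Rightarrow> nat list \<Rightarrow> (nat \<times> nat) set \<Rightarrow> bool" where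
  "bracketing_complete a b w B \<longleftrightarrow>
     (\<forall>m n. m < n \<longrightarrow> n < length w \<longrightarrow> unbr B m \<longrightarrow> unbr B n \<longrightarrow> \<not> (w ! m = b \<and> w ! n = a))"

text \<open>A maximal ribbon starting at s, extending by steps South and/or West, consisting only of
  boxes with entries j or j' (given as a list of boxes from s to its Southwest-most box).\<close>
definition max_ribbon :: "nat list \<Rightarrow> nat list \<Rightarrow> (int \<times> int \<Rightarrow> nat) \<Rightarrow> nat \<Rightarrow> int \<times> int \<Rightarrow> (int \<times> int) list \<Rightarrow> bool" where
  "max_ribbon lam mu T j s ps \<longleftrightarrow>
     ps \<noteq> [] \<and> hd ps = s
   \<and> (\<forall>m. Suc m < length ps \<longrightarrow> ps ! Suc m \<in> {south (ps ! m), west (ps ! m)})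
   \<and> (\<forall>p \<in> set ps. entry lam mu T p \<in> {enat (primed j), enat (unprimed j)})
   \<and> entry lam mu T (south (last ps)) \<notin> {enat (primed j), enat (unprimed j)}
   \<and> entry lam mu T (west (last ps)) \<notin> {enat (primed j), enat (unprimed j)}"

end

theory Submission
  imports Defs
begin

text \<open>Since x carries an unbracketed i, every j read before x is bracketed with an i that
  is also read before x; so any stretch of the reading word ending just before x contains at
  least as many i's as j's.

  (a) If E_x holds j' and the box below it holds at most j, then below the run of i's ending
  at x the next row holds j's from one column right of the start of the run up to E_x: one
  j more than there are i's of the run before x, which contradicts the count.

  (b) Walking along the ribbon from S_x, the surplus of i's over j's read from the current
  box up to x stays bounded by the number of i's in the row above to its left, minus one if
  the box holds j.  As the surplus is nonnegative, every j of the ribbon has an i above and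
  to its left, hence to its northwest; and the ribbon cannot end in a j, whose western
  neighbour would then be a j' or a j.\<close>

definition read_before :: "int \<times> int \<Rightarrow> int \<times> int \<Rightarrow> bool" where
  "read_before p q \<longleftrightarrow> fst q < fst p \<or> (fst p = fst q \<and> snd p < snd q)"

lemma read_before_trans: "read_before p q \<Longrightarrow> read_before q s \<Longrightarrow> read_before p s"
  by (auto simp: read_before_def)

lemma read_before_irrefl: "\<not> read_before p p"
  by (simp add: read_before_def)

lemma finite_boxes: "finite (boxes lam mu)"
proof (rule finite_subset)
  show "boxes lam mu \<subseteq> {0..int (length lam)} \<times> {0..int (sum_list lam)}"
  proof
    fix q assume q: "q \<in> boxes lam mu"
    then have "lam ! nat (fst q) \<le> sum_list lam"
      by (intro elem_le_sum_list) (auto simp: boxes_def)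
    with q show "q \<in> {0..int (length lam)} \<times> {0..int (sum_list lam)}"
      by (auto simp: boxes_def)
  qed
qed simp

lemma mem_reading_word_iff:
  "(v, q) \<in> set (reading_word lam mu T) \<longleftrightarrow> v = T q \<and> q \<in> boxes lam mu \<and> even (T q)"
proof
  assume "(v, q) \<in> set (reading_word lam mu T)"
  then show "v = T q \<and> q \<in> boxes lam mu \<and> even (T q)"
    by (auto simp: reading_word_def boxes_def)
next
  assume "v = T q \<and> q \<in> boxes lam mu \<and> even (T q)"
  moreover obtain a b where q: "q = (a, b)" by (cases q)
  ultimately have "v = T (a, b)" "a \<ge> 0" "b \<ge> 0" "nat a < length lam"
    "nat b \<in> set (filter (\<lambda>c. even (T (a, int c))) [part mu (nat a)..<lam ! nat a])"
    by (auto simp: boxes_def)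
  with q show "(v, q) \<in> set (reading_word lam mu T)"
    unfolding reading_word_def by force
qed

lemma sorted_reading_word:
  "sorted_wrt (\<lambda>u v. read_before (snd u) (snd v)) (reading_word lam mu T)"
proof -
  have "sorted_wrt (\<lambda>u v. read_before (snd u) (snd v))
          (concat (map (\<lambda>r. map (\<lambda>c. (T (int r, int c), (int r, int c)))
             (filter (\<lambda>c. even (T (int r, int c))) [part mu r..<lam ! r])) rs))"
    if "sorted_wrt (>) rs" for rs
    using that
  proof (induction rs)
    case (Cons r rs)
    have "sorted_wrt (\<lambda>u v. read_before (snd u) (snd v))
            (map (\<lambda>c. (T (int r, int c), (int r, int c)))
               (filter (\<lambda>c. even (T (int r, int c))) [part mu r..<lam ! r]))"
      unfolding sorted_wrt_map
      by (intro sorted_wrt_filter sorted_wrt_mono_rel[OF _ sorted_wrt_upt])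
        (auto simp: read_before_def)
    with Cons show ?case
      by (auto simp: sorted_wrt_append read_before_def)
  qed simp
  then show ?thesis
    unfolding reading_word_def by (simp add: sorted_wrt_rev)
qed

lemma bracketing_pairs:
  assumes "bracketing a b w B" "(p, q) \<in> B"
  shows "p < q \<and> q < length w \<and> w ! p = b \<and> w ! q = a
    \<and> (\<forall>m. p < m \<and> m < q \<longrightarrow> \<not> unbr B m) \<and> (\<forall>p'. (p', q) \<in> B \<longrightarrow> p' = p)"
  using assms
proof (induction arbitrary: p q rule: bracketing.induct)
  case (step B p0 q0)
  let ?B' = "insert (p0, q0) B"
  have still_bracketed: "\<not> unbr ?B' m" if "\<not> unbr B m" for m
    using that by (auto simp: unbr_def)
  have fresh: "(p', q0) \<notin> B" "(p0, q') \<notin> B" for p' q'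
    using step.hyps(6,7) by (force simp: unbr_def)+
  show ?case
  proof (cases "(p, q) = (p0, q0)")
    case True
    with step.hyps fresh still_bracketed show ?thesis by auto
  next
    case False
    with step.prems have "(p, q) \<in> B" by auto
    with step.IH[OF this] fresh still_bracketed show ?thesis by blast
  qed
qed simp

(* The partner q of l lies before n because nothing between a bracketed pair is unbracketed. *)
lemma bracketing_partner_before_unbracketed:
  assumes brk: "bracketing a b w B" and compl: "bracketing_complete a b w B"
    and "a \<noteq> b" and n: "n < length w" "w ! n = a" "unbr B n"
    and l: "l < n" "w ! l = b"
  obtains q where "(l, q) \<in> B" "l < q" "q < n" "w ! q = a"
proof -
  have "\<not> unbr B l"
    using compl[unfolded bracketing_complete_def, rule_format, of l n] n l by blast
  moreover have "l \<notin> snd ` B"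
  proof
    assume "l \<in> snd ` B"
    then obtain p where "(p, l) \<in> B" by force
    from bracketing_pairs[OF brk this] have "w ! l = a" by blast
    with l(2) \<open>a \<noteq> b\<close> show False by simp
  qed
  ultimately have "l \<in> fst ` B"
    by (simp add: unbr_def)
  then obtain q where lq: "(l, q) \<in> B" by force
  note pair = bracketing_pairs[OF brk lq]
  have "q \<in> snd ` B"
    using lq by force
  with n(3) have "q \<noteq> n"
    by (auto simp: unbr_def)
  moreover have "\<not> n < q"
    using pair l(1) n(3) by blast
  ultimately have "q < n" by simp
  with pair show thesis
    by (intro that[OF lq]) simp_all
qed

lemma bracketing_count_before_unbracketed:
  assumes brk: "bracketing a b w B" and compl: "bracketing_complete a b w B"
    and "a \<noteq> b" and n: "n < length w" "w ! n = a" "unbr B n"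
    and up: "\<And>l l'. P l \<Longrightarrow> l \<le> l' \<Longrightarrow> l' < n \<Longrightarrow> P l'"
  shows "card {l. P l \<and> l < n \<and> w ! l = b} \<le> card {l. P l \<and> l < n \<and> w ! l = a}"
proof -
  let ?A = "{l. P l \<and> l < n \<and> w ! l = b}"
  let ?C = "{l. P l \<and> l < n \<and> w ! l = a}"
  have "\<exists>q. (l, q) \<in> B \<and> q \<in> ?C" if "l \<in> ?A" for l
  proof -
    from that have "P l" "l < n" "w ! l = b" by auto
    then obtain q where q: "(l, q) \<in> B" "l < q" "q < n" "w ! q = a"
      using bracketing_partner_before_unbracketed[OF brk compl \<open>a \<noteq> b\<close> n] by blast
    moreover have "P q"
      using up[OF \<open>P l\<close>] q by simp
    ultimately show ?thesis by blast
  qed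
  then have "\<forall>l \<in> ?A. \<exists>q. (l, q) \<in> B \<and> q \<in> ?C" by blast
  then obtain f where f: "\<forall>l \<in> ?A. (l, f l) \<in> B \<and> f l \<in> ?C"
    by (rule bchoice[THEN exE])
  have "inj_on f ?A"
  proof (rule inj_onI)
    fix l l' assume l: "l \<in> ?A" and l': "l' \<in> ?A" and eq: "f l = f l'"
    have "(l, f l) \<in> B" "(l', f l) \<in> B"
      using bspec[OF f l] bspec[OF f l'] unfolding eq by blast+
    with bracketing_pairs[OF brk \<open>(l, f l) \<in> B\<close>] show "l = l'" by blast
  qed
  moreover have "f ` ?A \<subseteq> ?C"
    using f by blast
  ultimately show ?thesis
    by (rule card_inj_on_le) auto
qed

context
  fixes k :: nat and lam mu :: "nat list" and T :: "int \<times> int \<Rightarrow> nat"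
  assumes tab: "primed_tableau k lam mu T"
begin

lemma tableau_row_mono:
  "(a, b) \<in> boxes lam mu \<Longrightarrow> (a, b') \<in> boxes lam mu \<Longrightarrow> b \<le> b' \<Longrightarrow> T (a, b) \<le> T (a, b')"
  using tab unfolding primed_tableau_def by blast

lemma tableau_col_mono:
  "(a, b) \<in> boxes lam mu \<Longrightarrow> (a', b) \<in> boxes lam mu \<Longrightarrow> a \<le> a' \<Longrightarrow> T (a, b) \<le> T (a', b)"
  using tab unfolding primed_tableau_def by blast

lemma tableau_primed_row_strict:
  assumes "(a, b) \<in> boxes lam mu" "(a, b') \<in> boxes lam mu" "b < b'" "odd (T (a, b))"
  shows "T (a, b) < T (a, b')"
proof -
  have "T (a, b) \<noteq> T (a, b')"
    using tab assms unfolding primed_tableau_def by (metis less_irrefl)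
  with tableau_row_mono[OF assms(1,2)] assms(3) show ?thesis by simp
qed

lemma tableau_unprimed_col_strict:
  assumes "(a, b) \<in> boxes lam mu" "(a', b) \<in> boxes lam mu" "a < a'" "even (T (a, b))"
  shows "T (a, b) < T (a', b)"
proof -
  have "T (a, b) \<noteq> T (a', b)"
    using tab assms unfolding primed_tableau_def by (metis less_irrefl)
  with tableau_col_mono[OF assms(1,2)] assms(3) show ?thesis by simp
qed

lemma boxes_between_rows:
  assumes "(a, d1) \<in> boxes lam mu" "(a + 1, d2) \<in> boxes lam mu" "d1 \<le> d" "d \<le> d2"
  shows "(a, d) \<in> boxes lam mu" "(a + 1, d) \<in> boxes lam mu"
proof -
  have sk: "skew_shape lam mu" using tab by (simp add: primed_tableau_def)
  have a0: "a \<ge> 0" using assms(1) by (simp add: boxes_def)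
  then have na: "nat (a + 1) = Suc (nat a)" by simp
  have lr: "Suc (nat a) < length lam" using assms(2) na by (simp add: boxes_def)
  have "lam ! Suc (nat a) \<le> lam ! nat a"
    using sorted_wrt_nth_less[of "(\<ge>)" lam "nat a" "Suc (nat a)"] sk lr
    by (simp add: skew_shape_def is_partition_def)
  moreover have "part mu (Suc (nat a)) \<le> part mu (nat a)"
    using sorted_wrt_nth_less[of "(\<ge>)" mu "nat a" "Suc (nat a)"] sk
    by (simp add: skew_shape_def is_partition_def part_def)
  ultimately show "(a, d) \<in> boxes lam mu" "(a + 1, d) \<in> boxes lam mu"
    using assms a0 na lr by (auto simp: boxes_def)
qed

(* In the encoding of Defs, 2 * i, 2 * i + 1 and 2 * i + 2 are the letters i, j' and j. *)
lemma i_above_left_forces_northwest_i: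
  assumes p: "(a, b) \<in> boxes lam mu" "T (a, b) \<in> {2 * i + 1, 2 * i + 2}"
    and d: "(a - 1, d) \<in> boxes lam mu" "d < b" "T (a - 1, d) = 2 * i"
  shows "T (a, b) = 2 * i + 2" "(a, b - 1) \<in> boxes lam mu"
    "(a - 1, b - 1) \<in> boxes lam mu" "T (a - 1, b - 1) = 2 * i"
proof -
  have "(a - 1 + 1, b) \<in> boxes lam mu" using p by simp
  note between = boxes_between_rows[OF d(1) this]
  have ad: "(a, d) \<in> boxes lam mu" and n: "(a - 1, b) \<in> boxes lam mu"
    and nw: "(a - 1, b - 1) \<in> boxes lam mu" and w: "(a, b - 1) \<in> boxes lam mu"
    using between[of d] between[of b] between[of "b - 1"] d(2) by simp_all
  have "2 * i < T (a, d)"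
    using tableau_unprimed_col_strict[OF d(1) ad] d(3) by simp
  moreover have "T (a, d) \<le> T (a, b)"
    using tableau_row_mono[OF ad p(1)] d(2) by simp
  moreover have "T (a, d) < T (a, b)" if "odd (T (a, d))"
    using tableau_primed_row_strict[OF ad p(1) d(2) that] .
  ultimately show j: "T (a, b) = 2 * i + 2"
    using p(2) by (cases "T (a, d) = 2 * i + 1") auto
  have "T (a - 1, b) \<le> T (a, b)"
    using tableau_col_mono[OF n p(1)] by simp
  moreover have "T (a - 1, b) < T (a, b)" if "even (T (a - 1, b))"
    using tableau_unprimed_col_strict[OF n p(1) _ that] by simp
  ultimately have "T (a - 1, b) \<le> 2 * i + 1"
    using j by (cases "even (T (a - 1, b))") (auto, presburger)
  moreover have "T (a - 1, b - 1) < T (a - 1, b)" if "odd (T (a - 1, b - 1))"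
    using tableau_primed_row_strict[OF nw n _ that] by simp
  moreover have "T (a - 1, b - 1) \<le> T (a - 1, b)"
    using tableau_row_mono[OF nw n] by simp
  moreover have "2 * i \<le> T (a - 1, b - 1)"
    using tableau_row_mono[OF d(1) nw] d by simp
  ultimately show "T (a - 1, b - 1) = 2 * i"
    by (cases "T (a - 1, b - 1) = 2 * i + 1") auto
  show "(a, b - 1) \<in> boxes lam mu" "(a - 1, b - 1) \<in> boxes lam mu"
    using w nw .
qed


lemma row_below_i_run:
  assumes i_box: "(r, c0) \<in> boxes lam mu" "T (r, c0) = 2 * i"
    and e: "(r + 1, e) \<in> boxes lam mu" "T (r + 1, e) \<le> 2 * i + 2"
    and d: "c0 \<le> d" "d \<le> e"
  shows "(r + 1, d) \<in> boxes lam mu" "2 * i < T (r + 1, d)" "c0 < d \<Longrightarrow> T (r + 1, d) = 2 * i + 2"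
proof -
  have box: "(r + 1, d') \<in> boxes lam mu" if "c0 \<le> d'" "d' \<le> e" for d'
    using boxes_between_rows(2)[OF i_box(1) e(1) that] .
  have "2 * i < T (r + 1, c0)"
    using tableau_unprimed_col_strict[OF i_box(1) box] i_box(2) d by simp
  then have range: "2 * i < T (r + 1, d') \<and> T (r + 1, d') \<le> 2 * i + 2" if "c0 \<le> d'" "d' \<le> e" for d'
    using tableau_row_mono[OF box box[OF that], of c0] tableau_row_mono[OF box[OF that] e(1)]
      that d e(2) by simp
  show "(r + 1, d) \<in> boxes lam mu" "2 * i < T (r + 1, d)"
    using box[OF d] range[OF d] by simp_all
  show "T (r + 1, d) = 2 * i + 2" if "c0 < d"
  proof (rule ccontr)
    assume "T (r + 1, d) \<noteq> 2 * i + 2"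
    with range[OF d] have primed: "T (r + 1, d) = 2 * i + 1" by simp
    have "T (r + 1, d - 1) \<le> T (r + 1, d)"
      using tableau_row_mono[OF box box] that d by simp
    with range[of "d - 1"] that d primed have "T (r + 1, d - 1) = 2 * i + 1" by simp
    with tableau_primed_row_strict[OF box box, of "d - 1" d] that d primed
    show False by simp
  qed
qed

end

lemma max_ribbon_nth:
  assumes "max_ribbon lam mu T (i + 1) s ps" "m < length ps"
  shows "ps ! m \<in> boxes lam mu" "T (ps ! m) \<in> {2 * i + 1, 2 * i + 2}"
proof -
  have "entry lam mu T (ps ! m) \<in> {enat (primed (i + 1)), enat (unprimed (i + 1))}"
    using assms nth_mem unfolding max_ribbon_def by blast
  then show "ps ! m \<in> boxes lam mu" "T (ps ! m) \<in> {2 * i + 1, 2 * i + 2}"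
    by (auto simp: entry_def primed_def unprimed_def split: if_splits)
qed

lemma leftmost_in_row:
  assumes "(r, c) \<in> boxes lam mu" "T (r, c) = v"
  obtains c0 where "(r, c0) \<in> boxes lam mu" "c0 \<le> c" "T (r, c0) = v"
    "\<And>d. (r, d) \<in> boxes lam mu \<Longrightarrow> T (r, d) = v \<Longrightarrow> c0 \<le> d"
proof -
  define S where "S = {d. (r, d) \<in> boxes lam mu \<and> T (r, d) = v}"
  have "S \<subseteq> snd ` boxes lam mu"
    unfolding S_def by (auto intro: image_eqI[where x = "(r, _)"])
  then have "finite S"
    using finite_subset finite_boxes by blast
  moreover have "c \<in> S"
    using assms by (simp add: S_def)
  ultimately have "Min S \<in> S" "Min S \<le> c" "\<And>d. d \<in> S \<Longrightarrow> Min S \<le> d"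
    by (auto intro: Min_in)
  with that[of "Min S"] show thesis
    unfolding S_def by blast
qed

locale unbracketed_letter =
  fixes k i n :: nat and lam mu :: "nat list" and T :: "int \<times> int \<Rightarrow> nat"
    and B :: "(nat \<times> nat) set"
  assumes tab: "primed_tableau k lam mu T"
    and brk: "bracketing (unprimed i) (unprimed (i + 1)) (map fst (ij_subword i lam mu T)) B"
    and compl: "bracketing_complete (unprimed i) (unprimed (i + 1)) (map fst (ij_subword i lam mu T)) B"
    and n_lt: "n < length (ij_subword i lam mu T)"
    and n_i: "fst (ij_subword i lam mu T ! n) = unprimed i"
    and n_unbr: "unbr B n"
begin

abbreviation L :: "(nat \<times> (int \<times> int)) list" where
  "L \<equiv> ij_subword i lam mu T"

definition x :: "int \<times> int" where
  "x = snd (L ! n)"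

lemma mem_ij_subword_iff:
  "(v, q) \<in> set L \<longleftrightarrow> v = T q \<and> q \<in> boxes lam mu \<and> (T q = 2 * i \<or> T q = 2 * i + 2)"
  unfolding ij_subword_def by (auto simp: mem_reading_word_iff unprimed_def)

lemma ij_subword_read_before_iff:
  assumes "m < length L" "m' < length L"
  shows "read_before (snd (L ! m)) (snd (L ! m')) \<longleftrightarrow> m < m'"
proof -
  have sorted: "sorted_wrt (\<lambda>u v. read_before (snd u) (snd v)) L"
    unfolding ij_subword_def by (rule sorted_wrt_filter) (rule sorted_reading_word)
  show ?thesis
  proof
    assume before: "read_before (snd (L ! m)) (snd (L ! m'))"
    show "m < m'"
    proof (rule ccontr)
      assume "\<not> m < m'"
      then consider "m = m'" | "m' < m" by linarith
      then show False
      proof cases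
        case 2
        with sorted_wrt_nth_less[OF sorted] assms
        have "read_before (snd (L ! m')) (snd (L ! m))" by simp
        with before show False
          using read_before_trans read_before_irrefl by blast
      qed (use before read_before_irrefl in simp)
    qed
  qed (use sorted_wrt_nth_less[OF sorted] assms in simp)
qed

lemma ij_subword_nth:
  assumes "m < length L"
  shows "fst (L ! m) = T (snd (L ! m))" "snd (L ! m) \<in> boxes lam mu"
    "T (snd (L ! m)) = 2 * i \<or> T (snd (L ! m)) = 2 * i + 2"
  using nth_mem[OF assms] mem_ij_subword_iff[of "fst (L ! m)" "snd (L ! m)"] by auto

lemma x_box: "x \<in> boxes lam mu" and x_letter: "T x = 2 * i"
  using ij_subword_nth[OF n_lt] n_i by (auto simp: x_def unprimed_def)

definition segment :: "int \<times> int \<Rightarrow> (int \<times> int) set" where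
  "segment p = {q \<in> boxes lam mu. \<not> read_before q p \<and> read_before q x}"

definition seg_count :: "nat \<Rightarrow> int \<times> int \<Rightarrow> nat" where
  "seg_count v p = card {q \<in> segment p. T q = v}"

lemma inj_on_ij_subword_boxes: "inj_on (\<lambda>l. snd (L ! l)) {..<length L}"
proof (rule inj_onI)
  fix l l' assume "l \<in> {..<length L}" "l' \<in> {..<length L}" "snd (L ! l) = snd (L ! l')"
  then show "l = l'"
    using ij_subword_read_before_iff[of l l'] ij_subword_read_before_iff[of l' l] read_before_irrefl
    by (metis lessThan_iff linorder_neqE_nat)
qed

lemma segment_letters_eq_image:
  assumes "v = 2 * i \<or> v = 2 * i + 2"
  shows "{q \<in> segment p. T q = v}
    = (\<lambda>l. snd (L ! l)) ` {l. \<not> read_before (snd (L ! l)) p \<and> l < n \<and> map fst L ! l = v}"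
proof (intro set_eqI iffI)
  fix q assume q: "q \<in> {q \<in> segment p. T q = v}"
  then have "(T q, q) \<in> set L"
    using assms unfolding mem_ij_subword_iff segment_def by auto
  then obtain l where l: "l < length L" "L ! l = (T q, q)"
    by (auto simp: in_set_conv_nth)
  then have "l < n"
    using q ij_subword_read_before_iff[OF l(1) n_lt] by (simp add: segment_def x_def)
  with q l have "l \<in> {l. \<not> read_before (snd (L ! l)) p \<and> l < n \<and> map fst L ! l = v}"
    by (simp add: segment_def)
  with l(2) show "q \<in> (\<lambda>l. snd (L ! l)) ` {l. \<not> read_before (snd (L ! l)) p \<and> l < n \<and> map fst L ! l = v}"
    by (intro image_eqI[where x = l]) simp_all
next
  fix q assume "q \<in> (\<lambda>l. snd (L ! l)) ` {l. \<not> read_before (snd (L ! l)) p \<and> l < n \<and> map fst L ! l = v}"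
  then obtain l where l: "q = snd (L ! l)" "\<not> read_before (snd (L ! l)) p" "l < n" "map fst L ! l = v"
    by auto
  with n_lt have "l < length L" by simp
  with l ij_subword_nth[of l] ij_subword_read_before_iff[OF _ n_lt, of l]
  show "q \<in> {q \<in> segment p. T q = v}"
    by (auto simp: segment_def x_def)
qed

lemma seg_count_j_le_i: "seg_count (2 * i + 2) p \<le> seg_count (2 * i) p"
proof -
  let ?P = "\<lambda>l. \<not> read_before (snd (L ! l)) p"
  have up: "?P l'" if "?P l" "l \<le> l'" "l' < n" for l l'
  proof -
    have "l = l' \<or> read_before (snd (L ! l)) (snd (L ! l'))"
      using ij_subword_read_before_iff[of l l'] that(2,3) n_lt by auto
    with that(1) show ?thesis
      using read_before_trans by blast
  qed
  have "card {l. ?P l \<and> l < n \<and> map fst L ! l = 2 * i + 2} \<le> card {l. ?P l \<and> l < n \<and> map fst L ! l = 2 * i}"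
    using bracketing_count_before_unbracketed[OF brk compl _ _ _ n_unbr up] n_lt n_i
    by (simp add: unprimed_def)
  moreover have "inj_on (\<lambda>l. snd (L ! l)) {l. ?P l \<and> l < n \<and> map fst L ! l = v}" for v
    using inj_on_ij_subword_boxes by (rule inj_on_subset) (use n_lt in auto)
  ultimately show ?thesis
    unfolding seg_count_def by (simp add: segment_letters_eq_image card_image)
qed

lemma finite_segment: "finite (segment p)"
  unfolding segment_def using finite_boxes by simp

lemma seg_count_step:
  assumes "read_before p' p" "p' \<in> boxes lam mu" "read_before p' x"
  shows "seg_count v p + (if T p' = v then 1 else 0) \<le> seg_count v p'"
proof -
  have sub: "segment p \<subseteq> segment p'"
    unfolding segment_def using assms(1) read_before_trans by blast
  have new: "p' \<in> segment p'" "p' \<notin> segment p"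
    using assms read_before_irrefl by (auto simp: segment_def)
  show ?thesis
  proof (cases "T p' = v")
    case True
    have "insert p' {q \<in> segment p. T q = v} \<subseteq> {q \<in> segment p'. T q = v}"
      using sub new True by blast
    from card_mono[OF _ this] new True show ?thesis
      by (simp add: seg_count_def finite_segment)
  next
    case False
    have "{q \<in> segment p. T q = v} \<subseteq> {q \<in> segment p'. T q = v}"
      using sub by blast
    from card_mono[OF _ this] False show ?thesis
      by (simp add: seg_count_def finite_segment)
  qed
qed

lemma segment_i_in_row_of_x:
  assumes "x = (r, c)" "(r + 1, c') \<in> boxes lam mu" "2 * i < T (r + 1, c')"
    and q: "q \<in> segment (r + 1, c')" "T q = 2 * i"
  shows "fst q = r" "snd q < c"
proof -
  obtain a b where qe: "q = (a, b)" by (cases q)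
  with q assms(1) have qb: "(a, b) \<in> boxes lam mu"
    and "a = r \<and> b < c \<or> a = r + 1 \<and> c' \<le> b"
    by (auto simp: segment_def read_before_def)
  moreover have "\<not> (a = r + 1 \<and> c' \<le> b)"
    using tableau_row_mono[OF tab assms(2), of b] assms(3) q(2) qb qe by auto
  ultimately show "fst q = r" "snd q < c"
    using qe by auto
qed

lemma east_primed_south_east_greater:
  assumes east: "entry lam mu T (east x) = enat (2 * i + 1)"
  shows "enat (2 * i + 2) < entry lam mu T (south (east x))"
proof (rule ccontr)
  assume "\<not> ?thesis"
  obtain r c where xe: "x = (r, c)" by (cases x)
  with \<open>\<not> ?thesis\<close> have se: "(r + 1, c + 1) \<in> boxes lam mu" "T (r + 1, c + 1) \<le> 2 * i + 2"
    by (auto simp: entry_def south_def east_def split: if_splits)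
  obtain c0 where c0: "(r, c0) \<in> boxes lam mu" "c0 \<le> c" "T (r, c0) = 2 * i"
    and c0_min: "\<And>d. (r, d) \<in> boxes lam mu \<Longrightarrow> T (r, d) = 2 * i \<Longrightarrow> c0 \<le> d"
    using leftmost_in_row[of r c lam mu T "2 * i"] x_box x_letter xe by auto
  note below = row_below_i_run[OF tab c0(1,3) se]
  have "{q \<in> segment (r + 1, c0). T q = 2 * i} \<subseteq> (\<lambda>d. (r, d)) ` {c0..<c}"
  proof
    fix q assume q: "q \<in> {q \<in> segment (r + 1, c0). T q = 2 * i}"
    note row = segment_i_in_row_of_x[OF xe below(1,2)[of c0] _ _, of q] c0(2)
    with q c0_min[of "snd q"] show "q \<in> (\<lambda>d. (r, d)) ` {c0..<c}"
      by (cases q) (auto simp: segment_def)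
  qed
  then have "seg_count (2 * i) (r + 1, c0) \<le> card ((\<lambda>d. (r, d)) ` {c0..<c})"
    unfolding seg_count_def by (intro card_mono) simp_all
  also have "\<dots> = card {c0..<c}"
    by (rule card_image) (simp add: inj_on_def)
  finally have i_count: "seg_count (2 * i) (r + 1, c0) \<le> card {c0..<c}" .
  have "card {c0<..c + 1} = card ((\<lambda>d. (r + 1, d)) ` {c0<..c + 1})"
    by (rule card_image[symmetric]) (simp add: inj_on_def)
  also have "\<dots> \<le> seg_count (2 * i + 2) (r + 1, c0)"
    unfolding seg_count_def
    by (intro card_mono)
      (simp add: finite_segment, use below xe in \<open>auto simp: segment_def read_before_def\<close>)
  finally show False
    using i_count seg_count_j_le_i[of "(r + 1, c0)"] c0(2) by simp
qed

definition i_above_left :: "int \<times> int \<Rightarrow> (int \<times> int) set" where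
  "i_above_left p = {q \<in> boxes lam mu. fst q = fst p - 1 \<and> snd q < snd p \<and> T q = 2 * i}"

definition ribbon_invariant :: "int \<times> int \<Rightarrow> bool" where
  "ribbon_invariant p \<longleftrightarrow>
     seg_count (2 * i) p + (if T p = 2 * i + 2 then 1 else 0) \<le> card (i_above_left p) + seg_count (2 * i + 2) p"

lemma finite_i_above_left: "finite (i_above_left p)"
  unfolding i_above_left_def using finite_boxes by simp

lemma i_above_left_witness:
  assumes "card (i_above_left (a, b)) \<noteq> 0"
  obtains d where "(a - 1, d) \<in> boxes lam mu" "d < b" "T (a - 1, d) = 2 * i"
proof -
  from assms obtain q where "q \<in> i_above_left (a, b)"
    by (metis card.empty ex_in_conv)
  with that[of "snd q"] show thesis
    by (cases q) (simp add: i_above_left_def)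
qed

lemma ribbon_invariant_start:
  assumes "south x \<in> boxes lam mu" "2 * i + 1 \<le> T (south x)"
  shows "ribbon_invariant (south x)"
proof -
  obtain r c where xe: "x = (r, c)" by (cases x)
  with assms have p: "(r + 1, c) \<in> boxes lam mu" "2 * i + 1 \<le> T (r + 1, c)"
    by (simp_all add: south_def)
  have "{q \<in> segment (r + 1, c). T q = 2 * i} \<subseteq> i_above_left (r + 1, c)"
    using segment_i_in_row_of_x[OF xe p(1)] p(2) by (auto simp: segment_def i_above_left_def)
  then have "seg_count (2 * i) (r + 1, c) \<le> card (i_above_left (r + 1, c))"
    unfolding seg_count_def by (intro card_mono finite_i_above_left)
  moreover have "seg_count (2 * i + 2) x + (if T (r + 1, c) = 2 * i + 2 then 1 else 0)
      \<le> seg_count (2 * i + 2) (r + 1, c)"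
    by (rule seg_count_step) (use p xe in \<open>auto simp: read_before_def\<close>)
  ultimately show ?thesis
    using xe by (simp add: ribbon_invariant_def south_def)
qed

lemma seg_count_i_south:
  assumes "(a + 1, b) \<in> boxes lam mu" "2 * i < T (a + 1, b)"
  shows "seg_count (2 * i) (a + 1, b) \<le> seg_count (2 * i) (a, b) + card (i_above_left (a + 1, b))"
proof -
  have "{q \<in> segment (a + 1, b). T q = 2 * i} \<subseteq> {q \<in> segment (a, b). T q = 2 * i} \<union> i_above_left (a + 1, b)"
  proof
    fix q assume q: "q \<in> {q \<in> segment (a + 1, b). T q = 2 * i}"
    obtain a' b' where qe: "q = (a', b')" by (cases q)
    have "\<not> (a' = a + 1 \<and> b \<le> b')"
      using tableau_row_mono[OF tab assms(1), of b'] assms(2) q qe by (auto simp: segment_def)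
    with q qe show "q \<in> {q \<in> segment (a, b). T q = 2 * i} \<union> i_above_left (a + 1, b)"
      by (auto simp: segment_def i_above_left_def read_before_def)
  qed
  then have "seg_count (2 * i) (a + 1, b) \<le> card ({q \<in> segment (a, b). T q = 2 * i} \<union> i_above_left (a + 1, b))"
    unfolding seg_count_def by (intro card_mono) (simp_all add: finite_segment finite_i_above_left)
  also have "\<dots> \<le> seg_count (2 * i) (a, b) + card (i_above_left (a + 1, b))"
    unfolding seg_count_def by (rule card_Un_le)
  finally show ?thesis .
qed

lemma ribbon_invariant_south:
  assumes p: "(a, b) \<in> boxes lam mu" "T (a, b) \<in> {2 * i + 1, 2 * i + 2}" "fst x < a"
    and s: "(a + 1, b) \<in> boxes lam mu" "T (a + 1, b) \<in> {2 * i + 1, 2 * i + 2}"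
    and inv: "ribbon_invariant (a, b)"
  shows "ribbon_invariant (a + 1, b)"
proof -
  have "T (a, b) < T (a + 1, b)" if "even (T (a, b))"
    using tableau_unprimed_col_strict[OF tab p(1) s(1) _ that] by simp
  with p(2) s(2) have primed: "T (a, b) = 2 * i + 1" by auto
  have "card (i_above_left (a, b)) = 0"
  proof (rule ccontr)
    assume "card (i_above_left (a, b)) \<noteq> 0"
    then obtain d where "(a - 1, d) \<in> boxes lam mu" "d < b" "T (a - 1, d) = 2 * i"
      by (rule i_above_left_witness)
    from i_above_left_forces_northwest_i(1)[OF tab p(1,2) this] primed show False by simp
  qed
  with inv primed have "seg_count (2 * i) (a, b) \<le> seg_count (2 * i + 2) (a, b)"
    by (simp add: ribbon_invariant_def)
  moreover have "seg_count (2 * i) (a + 1, b) \<le> seg_count (2 * i) (a, b) + card (i_above_left (a + 1, b))"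
    using s by (intro seg_count_i_south) auto
  moreover have "seg_count (2 * i + 2) (a, b) + (if T (a + 1, b) = 2 * i + 2 then 1 else 0)
      \<le> seg_count (2 * i + 2) (a + 1, b)"
    by (rule seg_count_step) (use s p in \<open>auto simp: read_before_def\<close>)
  ultimately show ?thesis
    by (simp add: ribbon_invariant_def)
qed

lemma ribbon_invariant_west:
  assumes p: "(a, b) \<in> boxes lam mu" "T (a, b) \<in> {2 * i + 1, 2 * i + 2}" "fst x < a"
    and w: "(a, b - 1) \<in> boxes lam mu" "T (a, b - 1) \<in> {2 * i + 1, 2 * i + 2}"
    and inv: "ribbon_invariant (a, b)"
  shows "ribbon_invariant (a, b - 1)"
proof -
  have "T (a, b - 1) < T (a, b)" if "odd (T (a, b - 1))"
    using tableau_primed_row_strict[OF tab w(1) p(1) _ that] by simp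
  with tableau_row_mono[OF tab w(1) p(1)] p(2) w(2) have unprimed: "T (a, b) = 2 * i + 2"
    by auto
  have west_read: "\<not> read_before q (a, b)" if "\<not> read_before q (a, b - 1)" "q \<noteq> (a, b - 1)" for q
    using that by (cases q) (auto simp: read_before_def)
  have "{q \<in> segment (a, b - 1). T q = 2 * i} \<subseteq> {q \<in> segment (a, b). T q = 2 * i}"
  proof
    fix q assume q: "q \<in> {q \<in> segment (a, b - 1). T q = 2 * i}"
    with w(2) have "q \<noteq> (a, b - 1)" by auto
    with q west_read[of q] show "q \<in> {q \<in> segment (a, b). T q = 2 * i}"
      unfolding segment_def by blast
  qed
  then have i_count: "seg_count (2 * i) (a, b - 1) \<le> seg_count (2 * i) (a, b)"
    unfolding seg_count_def using finite_segment by (intro card_mono) simp_all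
  have "i_above_left (a, b) \<subseteq> insert (a - 1, b - 1) (i_above_left (a, b - 1))"
    by (auto simp: i_above_left_def)
  then have "card (i_above_left (a, b)) \<le> card (insert (a - 1, b - 1) (i_above_left (a, b - 1)))"
    by (intro card_mono) (simp_all add: finite_i_above_left)
  also have "\<dots> \<le> card (i_above_left (a, b - 1)) + 1"
    using finite_i_above_left by (simp add: card_insert_if)
  finally have above_left: "card (i_above_left (a, b)) \<le> card (i_above_left (a, b - 1)) + 1" .
  have "seg_count (2 * i + 2) (a, b) + (if T (a, b - 1) = 2 * i + 2 then 1 else 0)
      \<le> seg_count (2 * i + 2) (a, b - 1)"
    by (rule seg_count_step) (use w p in \<open>auto simp: read_before_def\<close>)
  with inv unprimed i_count above_left show ?thesis
    by (simp add: ribbon_invariant_def)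
qed

lemma max_ribbon_invariant:
  assumes R: "max_ribbon lam mu T (i + 1) (south x) ps" and m: "m < length ps"
  shows "fst x < fst (ps ! m) \<and> ribbon_invariant (ps ! m)"
  using m
proof (induction m)
  case 0
  have "ps \<noteq> []" "hd ps = south x"
    using R by (simp_all add: max_ribbon_def)
  then have "ps ! 0 = south x"
    by (simp add: hd_conv_nth)
  with max_ribbon_nth[OF R 0] show ?case
    using ribbon_invariant_start by (auto simp: south_def)
next
  case (Suc m)
  then have IH: "fst x < fst (ps ! m)" "ribbon_invariant (ps ! m)" by simp_all
  obtain a b where pe: "ps ! m = (a, b)" by (cases "ps ! m")
  have p: "(a, b) \<in> boxes lam mu" "T (a, b) \<in> {2 * i + 1, 2 * i + 2}"
    using max_ribbon_nth[OF R, of m] Suc.prems pe by auto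
  have next_box: "ps ! Suc m \<in> boxes lam mu" "T (ps ! Suc m) \<in> {2 * i + 1, 2 * i + 2}"
    using max_ribbon_nth[OF R Suc.prems] by auto
  have "ps ! Suc m = (a + 1, b) \<or> ps ! Suc m = (a, b - 1)"
    using R Suc.prems pe unfolding max_ribbon_def by (auto simp: south_def west_def)
  then show ?case
  proof
    assume "ps ! Suc m = (a + 1, b)"
    with ribbon_invariant_south[OF p _ _ _ IH(2)[unfolded pe]] IH(1) pe next_box show ?case by simp
  next
    assume "ps ! Suc m = (a, b - 1)"
    with ribbon_invariant_west[OF p _ _ _ IH(2)[unfolded pe]] IH(1) pe next_box show ?case by simp
  qed
qed

lemma max_ribbon_j_northwest:
  assumes R: "max_ribbon lam mu T (i + 1) (south x) ps"
    and in_ps: "(a, b) \<in> set ps" and j: "T (a, b) = 2 * i + 2"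
  shows "(a, b - 1) \<in> boxes lam mu" "(a - 1, b - 1) \<in> boxes lam mu" "T (a - 1, b - 1) = 2 * i"
proof -
  obtain m where m: "m < length ps" "ps ! m = (a, b)"
    using in_ps[unfolded in_set_conv_nth] by blast
  note p = max_ribbon_nth[OF R m(1), unfolded m(2)]
  have "ribbon_invariant (a, b)"
    using max_ribbon_invariant[OF R m(1)] m(2) by simp
  with seg_count_j_le_i[of "(a, b)"] j have "card (i_above_left (a, b)) \<noteq> 0"
    by (simp add: ribbon_invariant_def)
  then obtain d where "(a - 1, d) \<in> boxes lam mu" "d < b" "T (a - 1, d) = 2 * i"
    by (rule i_above_left_witness)
  from i_above_left_forces_northwest_i(2-4)[OF tab p this]
  show "(a, b - 1) \<in> boxes lam mu" "(a - 1, b - 1) \<in> boxes lam mu" "T (a - 1, b - 1) = 2 * i" .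
qed

lemma max_ribbon_northwest_and_last:
  assumes R: "max_ribbon lam mu T (i + 1) (south x) ps"
  shows "\<forall>p \<in> set ps. entry lam mu T p = enat (2 * i + 2) \<longrightarrow> entry lam mu T (northwest p) = enat (2 * i)"
    "entry lam mu T (last ps) = enat (2 * i + 1)"
proof -
  show "\<forall>p \<in> set ps. entry lam mu T p = enat (2 * i + 2) \<longrightarrow> entry lam mu T (northwest p) = enat (2 * i)"
    using max_ribbon_j_northwest[OF R] by (auto simp: entry_def northwest_def split: if_splits)
  obtain a b where last: "last ps = (a, b)" by (cases "last ps")
  have "ps \<noteq> []"
    using R by (simp add: max_ribbon_def)
  with last have in_ps: "(a, b) \<in> set ps"
    using last_in_set by fastforce
  then obtain m where m: "m < length ps" "ps ! m = (a, b)"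
    unfolding in_set_conv_nth by blast
  note p = max_ribbon_nth[OF R m(1), unfolded m(2)]
  have "T (a, b) \<noteq> 2 * i + 2"
  proof
    assume j: "T (a, b) = 2 * i + 2"
    note nw = max_ribbon_j_northwest[OF R in_ps j]
    have "2 * i < T (a, b - 1)"
      using tableau_unprimed_col_strict[OF tab nw(2) nw(1)] nw(3) by simp
    moreover have "T (a, b - 1) \<le> 2 * i + 2"
      using tableau_row_mono[OF tab nw(1) p(1)] j by simp
    moreover have "entry lam mu T (west (a, b)) \<notin> {enat (2 * i + 1), enat (2 * i + 2)}"
      using R last by (simp add: max_ribbon_def primed_def unprimed_def)
    ultimately show False
      using nw(1) by (auto simp: entry_def west_def)
  qed
  with p last show "entry lam mu T (last ps) = enat (2 * i + 1)"
    by (auto simp: entry_def)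
qed

end

theorem lemma3p1:
  fixes k i n :: nat and lam mu :: "nat list" and T :: "int \<times> int \<Rightarrow> nat"
    and B :: "(nat \<times> nat) set"
  assumes tab: "primed_tableau k lam mu T"
    and i_ge: "1 \<le> i" and i_le: "i \<le> k - 1"
    and brk: "bracketing (unprimed i) (unprimed (i + 1)) (map fst (ij_subword i lam mu T)) B"
    and compl: "bracketing_complete (unprimed i) (unprimed (i + 1)) (map fst (ij_subword i lam mu T)) B"
    and n_lt: "n < length (ij_subword i lam mu T)"
    and n_i: "fst (ij_subword i lam mu T ! n) = unprimed i"
    and n_unbr: "unbr B n"
    and n_rightmost: "\<forall>m < length (ij_subword i lam mu T).
                        fst (ij_subword i lam mu T ! m) = unprimed i \<and> unbr B m \<longrightarrow> m \<le> n"
  shows "(let x = snd (ij_subword i lam mu T ! n); j = i + 1; c = entry lam mu T in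
           (c (east x) = enat (primed j) \<longrightarrow> c (south (east x)) > enat (unprimed j))
         \<and> (c (east x) \<ge> enat (unprimed j) \<and> c (south x) \<in> {enat (primed j), enat (unprimed j)} \<longrightarrow>
              (\<forall>ps. max_ribbon lam mu T j (south x) ps \<longrightarrow>
                 (\<forall>p \<in> set ps. c p = enat (unprimed j) \<longrightarrow> c (northwest p) = enat (unprimed i))
               \<and> c (last ps) = enat (primed j))))"
proof -
  interpret unbracketed_letter k i n lam mu T B
    using tab brk compl n_lt n_i n_unbr by unfold_locales
  have "primed (i + 1) = 2 * i + 1" "unprimed (i + 1) = 2 * i + 2" "unprimed i = 2 * i"
    by (simp_all add: primed_def unprimed_def)
  then show ?thesis
    unfolding Let_def x_def[symmetric]
    using east_primed_south_east_greater max_ribbon_northwest_and_last by simp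
qed

end
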